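(* Let $a>0$. The frame $e=\{e_0,e_1,e_2,e_3,e_4\}$ on $B_a^>$ defined by $e_0=\frac{\partial}{\partial x_0}-\frac{2x_0}{r}\cdot\frac{a^4r_o^2}{1+\beta}\,T$, $e_1=\frac{\partial}{\partial r}+\frac{r^2+x_0^2}{r^2}\cdot\frac{a^4r_o^2}{1+\beta}\,T$, $e_2=r^{-1}\frac{\partial}{\partial\sigma_1}$, $e_3=r^{-1}\frac{\partial}{\partial\sigma_2}$, $e_4=(r\beta)^{-1}\frac{\partial}{\partial\sigma_3}$, where $T=-(r^2+x_0^2)\frac{\partial}{\partial r}-2rx_0\frac{\partial}{\partial x_0}$, is a pointwise $g_a$-orthonormal frame on $B_a^>$ and is of class $C^1$.
   Context: On $\mathbb{R}^5$ use coordinates $x=(x_0,\dots,x_4)$, $r=\sqrt{x_1^2+x_2^2+x_3^2+x_4^2}$, Minkowski metric $g_0=-dx_0^2+\sum_{i=1}^4dx_i^2$. On $\{r>0\}$ define $\sigma_1=\frac{1}{r^2}(-x_2dx_1+x_1dx_2-x_4dx_3+x_3dx_4)$, $\sigma_2=\frac{1}{r^2}(-x_3dx_1+x_4dx_2+x_1dx_3-x_2dx_4)$, $\sigma_3=\frac{1}{r^2}(-x_4dx_1-x_3dx_2+x_2dx_3+x_1dx_4)$, so $g_0=-dx_0^2+dr^2+r^2(\sigma_1^2+\sigma_2^2+\sigma_3^2)$. The vector fields $\frac{\partial}{\partial\sigma_i}$ ($i=1,2,3$) on $\{r>0\}$ are the ones annihilated by $dx_0$ and $dr$ with $\sigma_j(\frac{\partial}{\partial\sigma_i})=\delta_{ij}$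 (the frame dual to $\sigma_1,\sigma_2,\sigma_3$ along the spheres), and $\frac{\partial}{\partial r}$, $\frac{\partial}{\partial x_0}$ are the coordinate fields of the cylindrical coordinates $(x_0,r,\text{point of }S^3)$. Let $L=\{r\le|x_0|\}$, $L_o=\{r=|x_0|\}$; $r_o=0$ on $L$ and $r_o=(r^2-x_0^2)/r$ elsewhere. For $a>0$: $B_a=\{0<r_o<1/a\}$, $\tilde{B}_a=B_a\cup L$, $B_a^>=\tilde{B}_a\setminus\{r=0\}$, $\beta=\sqrt{1-(ar_o)^4}$, $\alpha=(r^2+x_0^2)dr-2x_0r\,dx_0$, and $g_a=g_0-r^2(ar_o)^4\sigma_3^2+a^4(r\beta)^{-2}r_o^2\alpha^2$ on $B_a^>$, $g_a=g_0$ on $\{r=0\}$. Orthonormal means $g_a(e_0,e_0)=-1$, $g_a(e_i,e_i)=1$ for $i\ge1$, $g_a(e_i,e_j)=0$ for $i\ne j$. *)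

theory Defs
  imports "HOL-Analysis.Analysis"
begin

text \<open>Points of R^5 are vectors p :: real^5 with coordinates p$0,...,p$4.
  Tangent vectors are also elements of real^5 (standard coordinates).\<close>

definition rad :: "real^5 \<Rightarrow> real" where
  "rad p = sqrt ((p$1)^2 + (p$2)^2 + (p$3)^2 + (p$4)^2)"

definition Lcone :: "(real^5) set" where
  "Lcone = {p. rad p \<le> \<bar>p$0\<bar>}"

definition ro :: "real^5 \<Rightarrow> real" where
  "ro p = (if p \<in> Lcone then 0 else ((rad p)^2 - (p$0)^2) / rad p)"

definition Ba :: "real \<Rightarrow> (real^5) set" where
  "Ba a = {p. 0 < ro p \<and> ro p < 1 / a}"

definition Ba_tilde :: "real \<Rightarrow> (real^5) set" where
  "Ba_tilde a = Ba a \<union> Lcone"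

definition Ba_gt :: "real \<Rightarrow> (real^5) set" where
  "Ba_gt a = Ba_tilde a - {p. rad p = 0}"

definition beta :: "real \<Rightarrow> real^5 \<Rightarrow> real" where
  "beta a p = sqrt (1 - (a * ro p)^4)"

text \<open>One-forms, as functions of the base point and the tangent vector.\<close>

definition dx0 :: "real^5 \<Rightarrow> real^5 \<Rightarrow> real" where
  "dx0 p v = v$0"

definition dr :: "real^5 \<Rightarrow> real^5 \<Rightarrow> real" where
  "dr p v = (p$1 * v$1 + p$2 * v$2 + p$3 * v$3 + p$4 * v$4) / rad p"

definition sigma1 :: "real^5 \<Rightarrow> real^5 \<Rightarrow> real" where
  "sigma1 p v = (- p$2 * v$1 + p$1 * v$2 - p$4 * v$3 + p$3 * v$4) / (rad p)^2"

definition sigma2 :: "real^5 \<Rightarrow> real^5 \<Rightarrow> real" where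
  "sigma2 p v = (- p$3 * v$1 + p$4 * v$2 + p$1 * v$3 - p$2 * v$4) / (rad p)^2"

definition sigma3 :: "real^5 \<Rightarrow> real^5 \<Rightarrow> real" where
  "sigma3 p v = (- p$4 * v$1 - p$3 * v$2 + p$2 * v$3 + p$1 * v$4) / (rad p)^2"

definition coframe :: "real^5 \<Rightarrow> nat \<Rightarrow> real^5 \<Rightarrow> real" where
  "coframe p k v =
     (if k = 0 then dx0 p v else if k = 1 then dr p v else if k = 2 then sigma1 p v
      else if k = 3 then sigma2 p v else sigma3 p v)"

definition cyl_frame :: "real^5 \<Rightarrow> nat \<Rightarrow> real^5" where
  "cyl_frame p k = (THE w. \<forall>j<5. coframe p j w = (if j = k then 1 else 0))"

definition d_x0 :: "real^5 \<Rightarrow> real^5" where "d_x0 p = cyl_frame p 0"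
definition d_r :: "real^5 \<Rightarrow> real^5" where "d_r p = cyl_frame p 1"
definition d_sigma1 :: "real^5 \<Rightarrow> real^5" where "d_sigma1 p = cyl_frame p 2"
definition d_sigma2 :: "real^5 \<Rightarrow> real^5" where "d_sigma2 p = cyl_frame p 3"
definition d_sigma3 :: "real^5 \<Rightarrow> real^5" where "d_sigma3 p = cyl_frame p 4"

definition g0 :: "real^5 \<Rightarrow> real^5 \<Rightarrow> real" where
  "g0 u v = - u$0 * v$0 + u$1 * v$1 + u$2 * v$2 + u$3 * v$3 + u$4 * v$4"

definition alpha :: "real^5 \<Rightarrow> real^5 \<Rightarrow> real" where
  "alpha p v = ((rad p)^2 + (p$0)^2) * dr p v - 2 * p$0 * rad p * dx0 p v"

definition g_a :: "real \<Rightarrow> real^5 \<Rightarrow> real^5 \<Rightarrow> real^5 \<Rightarrow> real" where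
  "g_a a p u v =
     (if rad p = 0 then g0 u v
      else g0 u v - (rad p)^2 * (a * ro p)^4 * sigma3 p u * sigma3 p v
           + a^4 * inverse ((rad p * beta a p)^2) * (ro p)^2 * alpha p u * alpha p v)"

definition T_field :: "real^5 \<Rightarrow> real^5" where
  "T_field p = (- ((rad p)^2 + (p$0)^2)) *\<^sub>R d_r p - (2 * rad p * p$0) *\<^sub>R d_x0 p"

definition frame_e :: "real \<Rightarrow> real^5 \<Rightarrow> nat \<Rightarrow> real^5" where
  "frame_e a p k =
     (if k = 0 then d_x0 p - ((2 * p$0 / rad p) * (a^4 * (ro p)^2 / (1 + beta a p))) *\<^sub>R T_field p
      else if k = 1 then d_r p + (((rad p)^2 + (p$0)^2) / (rad p)^2 * (a^4 * (ro p)^2 / (1 + beta a p))) *\<^sub>R T_field p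
      else if k = 2 then inverse (rad p) *\<^sub>R d_sigma1 p
      else if k = 3 then inverse (rad p) *\<^sub>R d_sigma2 p
      else inverse (rad p * beta a p) *\<^sub>R d_sigma3 p)"

definition orthonormal_wrt :: "(real^5 \<Rightarrow> real^5 \<Rightarrow> real) \<Rightarrow> (nat \<Rightarrow> real^5) \<Rightarrow> bool" where
  "orthonormal_wrt g e \<longleftrightarrow>
     (\<forall>i<5. \<forall>j<5. g (e i) (e j) = (if i \<noteq> j then 0 else if i = 0 then -1 else 1))"

definition C1_on :: "('a::real_normed_vector) set \<Rightarrow> ('a \<Rightarrow> 'b::real_normed_vector) \<Rightarrow> bool" where
  "C1_on S f \<longleftrightarrow>
     (\<exists>f'. (\<forall>x\<in>S. (f has_derivative blinfun_apply (f' x)) (at x)) \<and> continuous_on S f')"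

end

theory Submission
  imports Defs
begin

text \<open>
  The cylindrical fields \<open>d/dx0, d/dr, d/dsigma1, d/dsigma2, d/dsigma3\<close> are explicit vectors
  \<open>E0, ..., E4\<close> (\<open>cyl_basis\<close>), \<open>g0\<close>-orthogonal with \<open>g0(Ek, Ek) = -1, 1, r^2, r^2, r^2\<close>.
  The key observation is that \<open>alpha = -g0(T, _)\<close>, so that
  \<open>g_a = g0 - r^2 (a ro)^4 sigma3^2 + K g0(T, _)^2\<close> with \<open>K = a^4 ro^2 / (r beta)^2\<close>,
  and that \<open>ek = lambda_k P(Ek)\<close> for the shear \<open>P v = v - mu g0(T, v) T\<close> (\<open>shear\<close>) with
  \<open>mu = a^4 ro^2 / ((1 + beta) r^2)\<close> and scalars \<open>lambda_k = 1, 1, 1/r, 1/r, 1/(r beta)\<close>.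
  For any symmetric bilinear \<open>g\<close> the shear carries \<open>g\<close> to \<open>g + K g(T, _)^2\<close> as soon as
  \<open>K (1 - mu N)^2 = mu (2 - mu N)\<close>, \<open>N = g(T, T)\<close>; here \<open>N = (r^2 - x0^2)^2 = r^2 ro^2\<close>
  off the cone gives \<open>mu N = 1 - beta\<close>, which is exactly this relation (on the cone
  \<open>ro = 0\<close> and everything is trivial). As \<open>sigma3(T) = 0\<close>, the \<open>sigma3\<close>-term survives
  unchanged and is absorbed by the factor \<open>1/(r beta)\<close> of \<open>e4\<close>.

  For the regularity, \<open>ro\<close> is not differentiable along the cone, but it only enters through
  \<open>ro^2 = max(0, r^2 - x0^2)^2 / r^2\<close>, which is \<open>C^1\<close>.
\<close>

lemma exhaust_5:
  fixes i :: 5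
  shows "i = 0 \<or> i = 1 \<or> i = 2 \<or> i = 3 \<or> i = 4"
proof (induct i)
  case (of_int z)
  then have "z = 0 \<or> z = 1 \<or> z = 2 \<or> z = 3 \<or> z = 4" by fastforce
  then show ?case by auto
qed

lemma all_5: "(\<forall>i::5. P i) \<longleftrightarrow> P 0 \<and> P 1 \<and> P 2 \<and> P 3 \<and> P 4"
  by (metis exhaust_5)

lemma vec5_eq_iff:
  "(x::real^5) = y \<longleftrightarrow> x$0 = y$0 \<and> x$1 = y$1 \<and> x$2 = y$2 \<and> x$3 = y$3 \<and> x$4 = y$4"
  by (simp add: vec_eq_iff all_5)

lemma less_5_cases: "(k::nat) < 5 \<Longrightarrow> k = 0 \<or> k = 1 \<or> k = 2 \<or> k = 3 \<or> k = 4"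
  by (auto simp: numeral_eq_Suc less_Suc_eq)

definition vec5 :: "real \<Rightarrow> real \<Rightarrow> real \<Rightarrow> real \<Rightarrow> real \<Rightarrow> real^5" where
  "vec5 a b c d e = (\<chi> i. if i = 0 then a else if i = 1 then b else if i = 2 then c else if i = 3 then d else e)"

lemma vec5_nth [simp]:
  "vec5 a b c d e $ 0 = a" "vec5 a b c d e $ 1 = b" "vec5 a b c d e $ 2 = c"
  "vec5 a b c d e $ 3 = d" "vec5 a b c d e $ 4 = e"
  by (simp_all add: vec5_def)

lemma bilinear_rank_one_shear:
  fixes g :: "'a::real_vector \<Rightarrow> 'a \<Rightarrow> real"
  assumes g: "bilinear g" "\<And>u v. g u v = g v u"
    and rel: "K * (1 - \<mu> * g t t)^2 = \<mu> * (2 - \<mu> * g t t)"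
  shows "g (u - (\<mu> * g t u) *\<^sub>R t) (v - (\<mu> * g t v) *\<^sub>R t)
           + K * g t (u - (\<mu> * g t u) *\<^sub>R t) * g t (v - (\<mu> * g t v) *\<^sub>R t) = g u v"
proof -
  have shear_shear: "g (u - (\<mu> * g t u) *\<^sub>R t) (v - (\<mu> * g t v) *\<^sub>R t)
          = g u v - \<mu> * g t u * g t v * (2 - \<mu> * g t t)"
    using g(1) g(2)[of u t]
    by (simp add: bilinear_lsub bilinear_rsub bilinear_lmul bilinear_rmul algebra_simps)
  have t_shear: "g t (w - (\<mu> * g t w) *\<^sub>R t) = g t w * (1 - \<mu> * g t t)" for w
    using g(1) by (simp add: bilinear_rsub bilinear_rmul algebra_simps)
  have "g (u - (\<mu> * g t u) *\<^sub>R t) (v - (\<mu> * g t v) *\<^sub>R t)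
           + K * g t (u - (\<mu> * g t u) *\<^sub>R t) * g t (v - (\<mu> * g t v) *\<^sub>R t)
        = g u v - g t u * g t v * (\<mu> * (2 - \<mu> * g t t) - K * (1 - \<mu> * g t t)^2)"
    unfolding shear_shear t_shear by (simp add: power2_eq_square algebra_simps)
  then show ?thesis
    using rel by simp
qed

section \<open>C^1 functions\<close>

lemma C1_on_imp_continuous_on: "C1_on S f \<Longrightarrow> continuous_on S f"
  unfolding C1_on_def
  by (meson continuous_at_imp_continuous_on has_derivative_continuous)

lemma C1_on_const: "C1_on S (\<lambda>x. c)"
  unfolding C1_on_def
  by (rule exI[of _ "\<lambda>x. 0"]) (simp add: zero_blinfun.rep_eq)

lemma C1_on_bounded_linear: "bounded_linear f \<Longrightarrow> C1_on S f"
  unfolding C1_on_def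
  by (rule exI[of _ "\<lambda>x. Blinfun f"])
     (simp add: bounded_linear_Blinfun_apply bounded_linear_imp_has_derivative)

lemma C1_on_add:
  assumes "C1_on S f" "C1_on S g"
  shows "C1_on S (\<lambda>x. f x + g x)"
proof -
  obtain f' g' where
    "\<forall>x\<in>S. (f has_derivative blinfun_apply (f' x)) (at x)" "continuous_on S f'"
    "\<forall>x\<in>S. (g has_derivative blinfun_apply (g' x)) (at x)" "continuous_on S g'"
    using assms unfolding C1_on_def by blast
  then show ?thesis
    unfolding C1_on_def
    by (intro exI[of _ "\<lambda>x. f' x + g' x"])
       (auto intro!: continuous_intros derivative_eq_intros simp: plus_blinfun.rep_eq)
qed

lemma C1_on_scaleR:
  fixes f :: "'a::real_normed_vector \<Rightarrow> real"
  assumes "C1_on S f" "C1_on S g"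
  shows "C1_on S (\<lambda>x. f x *\<^sub>R g x)"
proof -
  obtain f' g' where f': "\<forall>x\<in>S. (f has_derivative blinfun_apply (f' x)) (at x)" "continuous_on S f'"
    and g': "\<forall>x\<in>S. (g has_derivative blinfun_apply (g' x)) (at x)" "continuous_on S g'"
    using assms unfolding C1_on_def by blast
  show ?thesis
    unfolding C1_on_def
  proof (intro exI[of _ "\<lambda>x. f x *\<^sub>R g' x + (blinfun_scaleR_left (g x) o\<^sub>L f' x)"] conjI ballI)
    fix x assume "x \<in> S"
    then have "((\<lambda>x. f x *\<^sub>R g x) has_derivative (\<lambda>h. f x *\<^sub>R g' x h + f' x h *\<^sub>R g x)) (at x)"
      using f'(1) g'(1) by (auto intro!: derivative_eq_intros)
    then show "((\<lambda>x. f x *\<^sub>R g x) has_derivative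
                 blinfun_apply (f x *\<^sub>R g' x + (blinfun_scaleR_left (g x) o\<^sub>L f' x))) (at x)"
      by (simp add: plus_blinfun.rep_eq scaleR_blinfun.rep_eq)
  next
    show "continuous_on S (\<lambda>x. f x *\<^sub>R g' x + (blinfun_scaleR_left (g x) o\<^sub>L f' x))"
      using f'(2) g'(2) C1_on_imp_continuous_on[OF assms(1)] C1_on_imp_continuous_on[OF assms(2)]
      by (intro continuous_intros) auto
  qed
qed

lemma C1_on_compose_real:
  fixes f :: "'a::real_normed_vector \<Rightarrow> real"
  assumes "C1_on S f" "f ` S \<subseteq> U"
    and "\<And>y. y \<in> U \<Longrightarrow> (h has_real_derivative h' y) (at y)" "continuous_on U h'"
  shows "C1_on S (\<lambda>x. h (f x))"
proof -
  obtain f' where f': "\<forall>x\<in>S. (f has_derivative blinfun_apply (f' x)) (at x)" "continuous_on S f'"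
    using assms(1) unfolding C1_on_def by blast
  show ?thesis
    unfolding C1_on_def
  proof (intro exI[of _ "\<lambda>x. h' (f x) *\<^sub>R f' x"] conjI ballI)
    fix x assume "x \<in> S"
    then show "((\<lambda>x. h (f x)) has_derivative blinfun_apply (h' (f x) *\<^sub>R f' x)) (at x)"
      using has_derivative_compose[OF f'(1)[rule_format] has_field_derivative_imp_has_derivative[OF assms(3)]]
        assms(2) by (auto simp: o_def scaleR_blinfun.rep_eq)
  next
    show "continuous_on S (\<lambda>x. h' (f x) *\<^sub>R f' x)"
      using continuous_on_compose2[OF assms(4) C1_on_imp_continuous_on[OF assms(1)] assms(2)] f'(2)
      by (intro continuous_intros)
  qed
qed

lemma C1_on_cong_open:
  assumes "C1_on S g" "open U" "S \<subseteq> U" "\<And>x. x \<in> U \<Longrightarrow> f x = g x"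
  shows "C1_on S f"
proof -
  obtain g' where g': "\<forall>x\<in>S. (g has_derivative blinfun_apply (g' x)) (at x)" "continuous_on S g'"
    using assms(1) unfolding C1_on_def by blast
  have "(f has_derivative blinfun_apply (g' x)) (at x)" if "x \<in> S" for x
    using has_derivative_transform_within_open[OF g'(1)[rule_format, OF that] assms(2), of f]
      assms(3,4) that by auto
  with g'(2) show ?thesis
    unfolding C1_on_def by blast
qed

lemma C1_on_If: "C1_on S f \<Longrightarrow> C1_on S g \<Longrightarrow> C1_on S (\<lambda>x. if P then f x else g x)"
  by (cases P) simp_all

lemma C1_on_minus: "C1_on S f \<Longrightarrow> C1_on S (\<lambda>x. - f x)"
  using C1_on_scaleR[OF C1_on_const[of S "-1"], of f] by simp

lemma C1_on_diff: "C1_on S f \<Longrightarrow> C1_on S g \<Longrightarrow> C1_on S (\<lambda>x. f x - g x)"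
  using C1_on_add[of S f "\<lambda>x. - g x"] C1_on_minus[of S g] by simp

lemma C1_on_mult: "C1_on S (f :: _ \<Rightarrow> real) \<Longrightarrow> C1_on S g \<Longrightarrow> C1_on S (\<lambda>x. f x * g x)"
  using C1_on_scaleR[of S f g] by simp

lemma C1_on_power: "C1_on S (f :: _ \<Rightarrow> real) \<Longrightarrow> C1_on S (\<lambda>x. f x ^ n)"
  by (induction n) (simp_all add: C1_on_const C1_on_mult)

lemma C1_on_inverse:
  "C1_on S (f :: _ \<Rightarrow> real) \<Longrightarrow> (\<And>x. x \<in> S \<Longrightarrow> f x \<noteq> 0) \<Longrightarrow> C1_on S (\<lambda>x. inverse (f x))"
  by (erule C1_on_compose_real[where U = "- {0}" and h' = "\<lambda>y. - inverse (y^2)"])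
     (auto intro!: derivative_eq_intros continuous_intros simp: power2_eq_square)

lemma C1_on_divide:
  "C1_on S (f :: _ \<Rightarrow> real) \<Longrightarrow> C1_on S g \<Longrightarrow> (\<And>x. x \<in> S \<Longrightarrow> g x \<noteq> 0) \<Longrightarrow>
     C1_on S (\<lambda>x. f x / g x)"
  unfolding divide_inverse by (intro C1_on_mult C1_on_inverse)

lemma C1_on_sqrt:
  "C1_on S (f :: _ \<Rightarrow> real) \<Longrightarrow> (\<And>x. x \<in> S \<Longrightarrow> f x > 0) \<Longrightarrow> C1_on S (\<lambda>x. sqrt (f x))"
  by (erule C1_on_compose_real[where U = "{0<..}" and h' = "\<lambda>y. inverse (sqrt y) / 2"])
     (auto intro!: DERIV_real_sqrt continuous_intros)

lemma has_real_derivative_max0_square: "((\<lambda>y. (max 0 y)^2) has_real_derivative 2 * max 0 y) (at y)"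
proof (cases y "0 :: real" rule: linorder_cases)
  case less
  have "((\<lambda>y. 0) has_real_derivative 2 * max 0 y) (at y)"
    using less by simp
  then show ?thesis
    by (rule has_field_derivative_transform_within_open[where S = "{..<0}"]) (use less in auto)
next
  case greater
  have "((\<lambda>y. y^2) has_real_derivative 2 * max 0 y) (at y)"
    using greater by (auto intro!: derivative_eq_intros)
  then show ?thesis
    by (rule has_field_derivative_transform_within_open[where S = "{0<..}"]) (use greater in auto)
next
  case equal
  have "((\<lambda>h. max 0 h) \<longlongrightarrow> max 0 0) (at (0::real))"
    by (intro tendsto_intros)
  moreover have "\<forall>\<^sub>F h in at 0. max 0 h = ((max 0 (0 + h))^2 - (max 0 0)^2) / (h::real)"
    by (auto simp: eventually_at_filter max_def power2_eq_square)
  ultimately have "((\<lambda>h. ((max 0 (0 + h))^2 - (max 0 0)^2) / h) \<longlongrightarrow> 0) (at (0::real))"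
    by (auto intro: Lim_transform_eventually)
  then show ?thesis
    unfolding equal DERIV_def by simp
qed

lemma C1_on_max0_square:
  assumes "C1_on S (f :: _ \<Rightarrow> real)"
  shows "C1_on S (\<lambda>x. (max 0 (f x))^2)"
proof (rule C1_on_compose_real[of S f UNIV "\<lambda>y. (max 0 y)^2" "\<lambda>y. 2 * max 0 y"])
  show "continuous_on UNIV (\<lambda>y::real. 2 * max 0 y)"
    by (intro continuous_intros)
qed (use assms has_real_derivative_max0_square in auto)

lemma C1_on_vec5:
  assumes "C1_on S f0" "C1_on S f1" "C1_on S f2" "C1_on S f3" "C1_on S f4"
  shows "C1_on S (\<lambda>x. vec5 (f0 x) (f1 x) (f2 x) (f3 x) (f4 x))"
proof -
  have "vec5 (f0 x) (f1 x) (f2 x) (f3 x) (f4 x) =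
          f0 x *\<^sub>R vec5 1 0 0 0 0 + f1 x *\<^sub>R vec5 0 1 0 0 0 + f2 x *\<^sub>R vec5 0 0 1 0 0
          + f3 x *\<^sub>R vec5 0 0 0 1 0 + f4 x *\<^sub>R vec5 0 0 0 0 1" for x
    by (simp add: vec5_eq_iff)
  then show ?thesis
    using assms by (simp only:) (intro C1_on_add C1_on_scaleR C1_on_const)
qed

lemma C1_on_vec_nth: "C1_on S (\<lambda>x. x $ i)"
  by (rule C1_on_bounded_linear[OF bounded_linear_vec_nth])

section \<open>The cylindrical frame\<close>

lemma rad_squared: "(rad p)^2 = (p$1)^2 + (p$2)^2 + (p$3)^2 + (p$4)^2"
  unfolding rad_def by simp

lemma rad_nonneg: "rad p \<ge> 0"
  unfolding rad_def by simp

lemma rad_mult_self: "rad p * rad p = p$1 * p$1 + p$2 * p$2 + p$3 * p$3 + p$4 * p$4"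
  by (metis rad_squared power2_eq_square)

definition cyl_basis :: "real^5 \<Rightarrow> nat \<Rightarrow> real^5" where
  "cyl_basis p k =
     (if k = 0 then vec5 1 0 0 0 0
      else if k = 1 then vec5 0 (p$1 / rad p) (p$2 / rad p) (p$3 / rad p) (p$4 / rad p)
      else if k = 2 then vec5 0 (- p$2) (p$1) (- p$4) (p$3)
      else if k = 3 then vec5 0 (- p$3) (p$4) (p$1) (- p$2)
      else vec5 0 (- p$4) (- p$3) (p$2) (p$1))"

lemma coframe_cyl_basis:
  assumes "rad p \<noteq> 0" "j < 5" "k < 5"
  shows "coframe p j (cyl_basis p k) = (if j = k then 1 else 0)"
  using less_5_cases[OF assms(2)] less_5_cases[OF assms(3)] assms(1)
  by (elim disjE)
     (simp_all add: coframe_def cyl_basis_def dx0_def dr_def sigma1_def sigma2_def sigma3_def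
        divide_simps power2_eq_square, simp_all add: rad_mult_self algebra_simps)

lemma cyl_basis_expansion:
  assumes "rad p \<noteq> 0"
  shows "w = dx0 p w *\<^sub>R cyl_basis p 0 + dr p w *\<^sub>R cyl_basis p 1 + sigma1 p w *\<^sub>R cyl_basis p 2
           + sigma2 p w *\<^sub>R cyl_basis p 3 + sigma3 p w *\<^sub>R cyl_basis p 4"
  using assms unfolding vec5_eq_iff
  by (simp add: cyl_basis_def dx0_def dr_def sigma1_def sigma2_def sigma3_def divide_simps power2_eq_square)
     (simp add: rad_mult_self algebra_simps)

lemma coframe_determines_vector:
  assumes "rad p \<noteq> 0" "\<forall>j<5. coframe p j u = coframe p j w"
  shows "u = w"
proof -
  have "coframe p j u = coframe p j w" if "j < 5" for j
    using assms(2) that by blast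
  from this[of 0] this[of 1] this[of 2] this[of 3] this[of 4]
  have "dx0 p u = dx0 p w" "dr p u = dr p w" "sigma1 p u = sigma1 p w"
    "sigma2 p u = sigma2 p w" "sigma3 p u = sigma3 p w"
    by (simp_all add: coframe_def)
  then show ?thesis
    using cyl_basis_expansion[OF assms(1), of u] cyl_basis_expansion[OF assms(1), of w] by simp
qed

lemma cyl_frame_eq_cyl_basis:
  assumes "rad p \<noteq> 0" "k < 5"
  shows "cyl_frame p k = cyl_basis p k"
  unfolding cyl_frame_def
proof (rule the_equality)
  show "\<forall>j<5. coframe p j (cyl_basis p k) = (if j = k then 1 else 0)"
    using coframe_cyl_basis assms by simp
next
  fix w assume "\<forall>j<5. coframe p j w = (if j = k then 1 else 0)"
  then show "w = cyl_basis p k"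
    using coframe_determines_vector[OF assms(1)] coframe_cyl_basis[OF assms(1) _ assms(2)] by simp
qed

section \<open>The Minkowski metric and the field T\<close>

lemma bilinear_g0: "bilinear g0"
  unfolding bilinear_def linear_iff by (simp add: g0_def algebra_simps)

lemma g0_commute: "g0 u v = g0 v u"
  unfolding g0_def by (simp add: mult.commute)

lemma g0_cyl_basis:
  assumes "rad p \<noteq> 0" "i < 5" "j < 5"
  shows "g0 (cyl_basis p i) (cyl_basis p j) =
           (if i \<noteq> j then 0 else if i = 0 then -1 else if i = 1 then 1 else (rad p)^2)"
  using less_5_cases[OF assms(2)] less_5_cases[OF assms(3)] assms(1)
  by (elim disjE)
     (simp_all add: g0_def cyl_basis_def divide_simps power2_eq_square,
      simp_all add: rad_mult_self algebra_simps)

lemma g0_cyl_basis_0: "g0 (cyl_basis p 0) v = - dx0 p v"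
  by (simp add: g0_def cyl_basis_def dx0_def)

lemma g0_cyl_basis_1: "g0 (cyl_basis p 1) v = dr p v"
  by (simp add: g0_def cyl_basis_def dr_def add_divide_distrib)

lemma T_field_eq:
  assumes "rad p \<noteq> 0"
  shows "T_field p = (- ((rad p)^2 + (p$0)^2)) *\<^sub>R cyl_basis p 1 - (2 * rad p * p$0) *\<^sub>R cyl_basis p 0"
  using assms by (simp add: T_field_def d_r_def d_x0_def cyl_frame_eq_cyl_basis)

lemma dx0_T_field:
  assumes "rad p \<noteq> 0"
  shows "dx0 p (T_field p) = - (2 * rad p * p$0)"
  using assms by (simp add: T_field_eq cyl_basis_def dx0_def)

lemma dr_T_field:
  assumes "rad p \<noteq> 0"
  shows "dr p (T_field p) = - ((rad p)^2 + (p$0)^2)"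
  using assms
  by (simp add: T_field_eq cyl_basis_def dr_def divide_simps del: One_nat_def)
     (simp add: rad_mult_self power2_eq_square algebra_simps)

lemma sigma3_T_field:
  assumes "rad p \<noteq> 0"
  shows "sigma3 p (T_field p) = 0"
  using assms by (simp add: T_field_eq cyl_basis_def sigma3_def algebra_simps del: One_nat_def)

lemma g0_T_field:
  assumes "rad p \<noteq> 0"
  shows "g0 (T_field p) v = - alpha p v"
  using assms bilinear_g0
  by (simp add: T_field_eq bilinear_lsub bilinear_lmul g0_cyl_basis_0 g0_cyl_basis_1 alpha_def
      del: One_nat_def)
     (simp add: algebra_simps)

lemma g0_T_field_self:
  assumes "rad p \<noteq> 0"
  shows "g0 (T_field p) (T_field p) = ((rad p)^2 - (p$0)^2)^2"
  using assms
  by (simp add: g0_T_field alpha_def dx0_T_field dr_T_field) (simp add: power2_eq_square algebra_simps)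

lemma g0_T_field_cyl_basis:
  assumes "rad p \<noteq> 0" "k < 5"
  shows "g0 (T_field p) (cyl_basis p k) =
           (if k = 0 then 2 * rad p * p$0 else if k = 1 then - ((rad p)^2 + (p$0)^2) else 0)"
proof -
  have "g0 (T_field p) (cyl_basis p 0) = 2 * rad p * p$0"
    using assms(1) by (simp add: g0_commute[of "T_field p"] g0_cyl_basis_0 dx0_T_field)
  moreover have "g0 (T_field p) (cyl_basis p 1) = - ((rad p)^2 + (p$0)^2)"
    using assms(1) g0_cyl_basis_1 dr_T_field by (simp add: g0_commute[of "T_field p"])
  moreover have "g0 (T_field p) (cyl_basis p k) = 0" if "2 \<le> k"
    using assms that coframe_cyl_basis[OF assms(1), of 0 k] coframe_cyl_basis[OF assms(1), of 1 k]
    by (simp add: g0_T_field alpha_def coframe_def)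
  ultimately show ?thesis
    by (auto simp del: One_nat_def)
qed

section \<open>Orthonormality\<close>

lemma mem_Ba_gtD:
  assumes "a > 0" "p \<in> Ba_gt a"
  shows "rad p > 0" "0 \<le> ro p" "a * ro p < 1"
    and "ro p = 0 \<or> ro p * rad p = (rad p)^2 - (p$0)^2"
proof -
  have r: "rad p \<noteq> 0" and "p \<in> Ba a \<or> p \<in> Lcone"
    using assms(2) unfolding Ba_gt_def Ba_tilde_def by auto
  then show "rad p > 0"
    using rad_nonneg[of p] by simp
  have "0 \<le> ro p \<and> a * ro p < 1 \<and> (ro p = 0 \<or> ro p * rad p = (rad p)^2 - (p$0)^2)"
  proof (cases "p \<in> Lcone")
    case False
    with \<open>p \<in> Ba a \<or> p \<in> Lcone\<close> have "0 < ro p" "ro p < 1 / a"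
      unfolding Ba_def by auto
    with False r assms(1) show ?thesis
      by (simp add: ro_def field_simps power2_eq_square)
  qed (simp add: ro_def)
  then show "0 \<le> ro p" "a * ro p < 1" "ro p = 0 \<or> ro p * rad p = (rad p)^2 - (p$0)^2"
    by simp_all
qed

lemma beta_pos_and_square:
  assumes "a > 0" "0 \<le> ro p" "a * ro p < 1"
  shows "beta a p > 0" "(beta a p)^2 = 1 - (a * ro p)^4"
proof -
  have "(a * ro p)^4 < 1"
    using assms by (simp add: power_less_one_iff)
  then show "beta a p > 0" "(beta a p)^2 = 1 - (a * ro p)^4"
    unfolding beta_def by simp_all
qed

lemma g_a_alt:
  assumes "rad p \<noteq> 0"
  shows "g_a a p u v = g0 u v - (rad p)^2 * (a * ro p)^4 * sigma3 p u * sigma3 p v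
           + a^4 * inverse ((rad p * beta a p)^2) * (ro p)^2 * g0 (T_field p) u * g0 (T_field p) v"
  using assms by (simp add: g_a_def g0_T_field)

lemma linear_sigma3: "linear (sigma3 p)"
  by (simp add: linear_iff sigma3_def add_divide_distrib diff_divide_distrib algebra_simps)

lemma linear_alpha: "linear (alpha p)"
  by (simp add: linear_iff alpha_def dr_def dx0_def add_divide_distrib algebra_simps)

lemma g_a_scaleR: "g_a a p (c *\<^sub>R u) (d *\<^sub>R v) = c * d * g_a a p u v"
  using bilinear_g0
  by (simp add: g_a_def linear_scale[OF linear_sigma3] linear_scale[OF linear_alpha]
      bilinear_lmul bilinear_rmul)
     (simp add: algebra_simps)

definition shear_coeff :: "real \<Rightarrow> real^5 \<Rightarrow> real" where
  "shear_coeff a p = a^4 * (ro p)^2 / ((1 + beta a p) * (rad p)^2)"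

definition shear :: "real \<Rightarrow> real^5 \<Rightarrow> real^5 \<Rightarrow> real^5" where
  "shear a p v = v - (shear_coeff a p * g0 (T_field p) v) *\<^sub>R T_field p"

definition frame_scale :: "real \<Rightarrow> real^5 \<Rightarrow> nat \<Rightarrow> real" where
  "frame_scale a p k =
     (if k < 2 then 1 else if k < 4 then inverse (rad p) else inverse (rad p * beta a p))"

lemma frame_e_eq_shear:
  assumes "rad p \<noteq> 0" "k < 5"
  shows "frame_e a p k = frame_scale a p k *\<^sub>R shear a p (cyl_basis p k)"
  using less_5_cases[OF assms(2)] g0_T_field_cyl_basis[OF assms(1)] assms(1)
  by (elim disjE)
     (simp_all add: frame_e_def frame_scale_def shear_def shear_coeff_def d_x0_def d_r_def
        d_sigma1_def d_sigma2_def d_sigma3_def cyl_frame_eq_cyl_basis power2_eq_square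
        del: One_nat_def,
      simp_all add: field_simps,
      simp_all add: add_divide_distrib diff_divide_distrib scaleR_left_distrib scaleR_left_diff_distrib)

lemma shear_coeff_mult_g0_T_field:
  assumes "a > 0" "p \<in> Ba_gt a"
  shows "shear_coeff a p * g0 (T_field p) (T_field p) = 1 - beta a p"
proof -
  note p = mem_Ba_gtD[OF assms]
  note b = beta_pos_and_square[OF assms(1) p(2,3)]
  show ?thesis
  proof (cases "ro p = 0")
    case True
    then show ?thesis by (simp add: shear_coeff_def beta_def)
  next
    case False
    then have "g0 (T_field p) (T_field p) = (ro p * rad p)^2"
      using p(1,4) g0_T_field_self by simp
    then have "shear_coeff a p * g0 (T_field p) (T_field p) = (a * ro p)^4 / (1 + beta a p)"
      using p(1) b(1) by (simp add: shear_coeff_def divide_simps power_mult_distrib)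
    also have "\<dots> = (1 - (beta a p)^2) / (1 + beta a p)"
      using b(2) by simp
    also have "\<dots> = 1 - beta a p"
      using b(1) by (simp add: field_simps power2_eq_square)
    finally show ?thesis .
  qed
qed

lemma g_a_shear:
  assumes "a > 0" "p \<in> Ba_gt a"
  shows "g_a a p (shear a p u) (shear a p v)
           = g0 u v - (rad p)^2 * (a * ro p)^4 * sigma3 p u * sigma3 p v"
proof -
  note p = mem_Ba_gtD[OF assms]
  note b = beta_pos_and_square[OF assms(1) p(2,3)]
  define \<mu> where "\<mu> = shear_coeff a p"
  define K where "K = a^4 * inverse ((rad p * beta a p)^2) * (ro p)^2"
  have "1 - \<mu> * g0 (T_field p) (T_field p) = beta a p" "2 - \<mu> * g0 (T_field p) (T_field p) = 1 + beta a p"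
    using shear_coeff_mult_g0_T_field[OF assms] by (simp_all add: \<mu>_def)
  moreover have "K * (beta a p)^2 = \<mu> * (1 + beta a p)"
    using p(1) b(1) by (simp add: K_def \<mu>_def shear_coeff_def divide_simps)
  ultimately have "K * (1 - \<mu> * g0 (T_field p) (T_field p))^2 = \<mu> * (2 - \<mu> * g0 (T_field p) (T_field p))"
    by simp
  from bilinear_rank_one_shear[OF bilinear_g0 g0_commute this]
  have "g0 (shear a p u) (shear a p v) + K * g0 (T_field p) (shear a p u) * g0 (T_field p) (shear a p v)
          = g0 u v"
    by (simp add: shear_def \<mu>_def)
  moreover have "sigma3 p (shear a p w) = sigma3 p w" for w
    using p(1)
    by (simp add: shear_def linear_diff[OF linear_sigma3] linear_scale[OF linear_sigma3] sigma3_T_field)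
  ultimately show ?thesis
    using p(1) by (simp add: g_a_alt K_def algebra_simps)
qed

lemma orthonormal_frame_e:
  assumes "a > 0" "p \<in> Ba_gt a"
  shows "orthonormal_wrt (g_a a p) (frame_e a p)"
  unfolding orthonormal_wrt_def
proof (intro allI impI)
  fix i j :: nat
  assume ij: "i < 5" "j < 5"
  note p = mem_Ba_gtD[OF assms]
  note b = beta_pos_and_square[OF assms(1) p(2,3)]
  have r: "rad p \<noteq> 0"
    using p(1) by simp
  have sigma3_basis: "sigma3 p (cyl_basis p k) = (if k = 4 then 1 else 0)" if "k < 5" for k
    using coframe_cyl_basis[OF r, of 4 k] that by (simp add: coframe_def)
  have "g_a a p (frame_e a p i) (frame_e a p j) = frame_scale a p i * frame_scale a p j *
          (g0 (cyl_basis p i) (cyl_basis p j)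
            - (rad p)^2 * (a * ro p)^4 * sigma3 p (cyl_basis p i) * sigma3 p (cyl_basis p j))"
    using ij r by (simp add: frame_e_eq_shear g_a_scaleR g_a_shear[OF assms])
  also have "\<dots> = (if i \<noteq> j then 0 else if i = 0 then -1 else 1)"
    using less_5_cases[OF ij(1)] less_5_cases[OF ij(2)] g0_cyl_basis[OF r ij] sigma3_basis ij p(1)
      b(1) b(2)[symmetric]
    by (elim disjE)
       (simp_all add: frame_scale_def field_simps power2_eq_square, simp add: distrib_left[symmetric])
  finally show "g_a a p (frame_e a p i) (frame_e a p j) = (if i \<noteq> j then 0 else if i = 0 then -1 else 1)" .
qed

section \<open>Regularity\<close>

lemma C1_on_rad: "(\<And>p. p \<in> S \<Longrightarrow> rad p \<noteq> 0) \<Longrightarrow> C1_on S rad"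
  unfolding rad_def
  by (intro C1_on_sqrt C1_on_add C1_on_power C1_on_vec_nth)
     (metis rad_def rad_nonneg less_eq_real_def real_sqrt_gt_0_iff)

lemma C1_on_cyl_basis: "(\<And>p. p \<in> S \<Longrightarrow> rad p \<noteq> 0) \<Longrightarrow> C1_on S (\<lambda>p. cyl_basis p k)"
  unfolding cyl_basis_def
  by (intro C1_on_If C1_on_vec5 C1_on_const C1_on_vec_nth C1_on_minus C1_on_divide C1_on_rad)

lemma open_rad_neq_0: "open {p. rad p \<noteq> 0}"
  unfolding rad_def by (intro open_Collect_neq continuous_intros)

lemma C1_on_cyl_frame:
  assumes "\<And>p. p \<in> S \<Longrightarrow> rad p \<noteq> 0" "k < 5"
  shows "C1_on S (\<lambda>p. cyl_frame p k)"
  using assms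
  by (intro C1_on_cong_open[OF C1_on_cyl_basis open_rad_neq_0]) (auto simp: cyl_frame_eq_cyl_basis)

lemma ro_squared: "(ro p)^2 = (max 0 ((rad p)^2 - (p$0)^2))^2 / (rad p)^2"
proof (cases "p \<in> Lcone")
  case True
  then have "rad p \<le> \<bar>p$0\<bar>"
    unfolding Lcone_def by simp
  then have "(rad p)^2 \<le> \<bar>p$0\<bar>^2"
    by (intro power_mono) (simp_all add: rad_nonneg)
  with True show ?thesis
    by (simp add: ro_def)
next
  case False
  then have "\<bar>p$0\<bar> < rad p"
    unfolding Lcone_def by simp
  then have "\<bar>p$0\<bar>^2 < (rad p)^2"
    by (intro power_strict_mono) simp_all
  with False show ?thesis
    by (simp add: ro_def power_divide)
qed

lemma C1_on_ro_squared: "(\<And>p. p \<in> S \<Longrightarrow> rad p \<noteq> 0) \<Longrightarrow> C1_on S (\<lambda>p. (ro p)^2)"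
  unfolding ro_squared
  by (intro C1_on_divide C1_on_max0_square C1_on_diff C1_on_power C1_on_rad C1_on_vec_nth) auto

lemma C1_on_beta:
  assumes "a > 0"
  shows "C1_on (Ba_gt a) (beta a)"
proof -
  have "beta a = (\<lambda>p. sqrt (1 - a^4 * ((ro p)^2)^2))"
    by (simp add: fun_eq_iff beta_def power_mult_distrib flip: power_mult)
  moreover have "0 < 1 - a^4 * ((ro p)^2)^2" if "p \<in> Ba_gt a" for p
  proof -
    have "(a * ro p)^4 < 1"
      using mem_Ba_gtD(2,3)[OF assms that] assms by (simp add: power_less_one_iff)
    then show ?thesis
      by (simp add: power_mult_distrib flip: power_mult)
  qed
  moreover have "rad p \<noteq> 0" if "p \<in> Ba_gt a" for p
    using mem_Ba_gtD(1)[OF assms that] by simp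
  ultimately show ?thesis
    by (simp only:) (intro C1_on_sqrt C1_on_diff C1_on_mult C1_on_const C1_on_ro_squared C1_on_power)
qed

lemma C1_on_frame_e:
  assumes "a > 0" "k < 5"
  shows "C1_on (Ba_gt a) (\<lambda>p. frame_e a p k)"
proof -
  have "rad p \<noteq> 0" "beta a p \<noteq> 0" "1 + beta a p \<noteq> 0" if "p \<in> Ba_gt a" for p
    using mem_Ba_gtD[OF assms(1) that] beta_pos_and_square[OF assms(1)] by force+
  then show ?thesis
    unfolding frame_e_def T_field_def d_x0_def d_r_def d_sigma1_def d_sigma2_def d_sigma3_def
    by (intro C1_on_If C1_on_add C1_on_diff C1_on_scaleR C1_on_minus C1_on_mult C1_on_divide
        C1_on_inverse C1_on_cyl_frame C1_on_ro_squared C1_on_beta[OF assms(1)] C1_on_rad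
        C1_on_vec_nth C1_on_const C1_on_power)
       auto
qed

theorem lemma1:
  fixes a :: real
  assumes "a > 0"
  shows "(\<forall>p\<in>Ba_gt a. orthonormal_wrt (g_a a p) (frame_e a p))
         \<and> (\<forall>k<5. C1_on (Ba_gt a) (\<lambda>p. frame_e a p k))"
  using orthonormal_frame_e[OF assms] C1_on_frame_e[OF assms] by blast

end
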